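(* If the space $\mathcal{M}^{\mathrm{new}}(\Gamma^3,R)$ is non-zero, then its dimension is at least two.
   Context: $\Gamma^3=\{\left(\begin{smallmatrix}a&b\\c&d\end{smallmatrix}\right)\in\mathrm{PSL}_2(\mathbb{Z}) : ab+cd\equiv0\bmod3\}$, an index-3 subgroup of $\mathrm{PSL}_2(\mathbb{Z})$. $\mathcal{M}(\Gamma,R)$ denotes the space of Maass cusp forms on $\Gamma$ with Laplace eigenvalue $\frac14+R^2$: real-analytic $\Gamma$-invariant functions $f$ on the upper half-plane with $-y^2(\partial_x^2+\partial_y^2)f=(\frac14+R^2)f$, vanishing at all cusps, with finite Petersson norm $\int_{\mathcal F_\Gamma}|f|^2y^{-2}dxdy$. The old space of $\Gamma^3$ is $\mathcal{M}(\mathrm{PSL}_2(\mathbb{Z}),R)\subseteq\mathcal{M}(\Gamma^3,R)$ and $\mathcal{M}^{\mathrm{new}}(\Gamma^3,R)$ is its orthogonal complement in $\mathcal{M}(\Gamma^3,R)$ w.r.t. the Petersson inner product $\langle f,g\rangle_{\Gamma^3}=\int_{\mathcal F_{\Gamma^3}}f\bar g\,y^{-2}dxdy$. *)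

theory Defs
  imports "HOL-Analysis.Analysis"
begin

definition UHP :: "complex set" where
  "UHP = {z. Im z > 0}"

text \<open>Integer matrices (a,b,c,d) of determinant 1; PSL2(Z) is their image mod +-1.
  All conditions below are invariant under M -> -M.\<close>
definition SL2Z :: "(int \<times> int \<times> int \<times> int) set" where
  "SL2Z = {(a,b,c,d). a*d - b*c = 1}"

definition mob :: "int \<times> int \<times> int \<times> int \<Rightarrow> complex \<Rightarrow> complex" where
  "mob M z = (case M of (a,b,c,d) \<Rightarrow> (of_int a * z + of_int b) / (of_int c * z + of_int d))"

definition Gamma3 :: "(int \<times> int \<times> int \<times> int) set" where
  "Gamma3 = {(a,b,c,d). a*d - b*c = 1 \<and> (a*b + c*d) mod 3 = 0}"

definition F1 :: "complex set" where
  "F1 = {z. Im z > 0 \<and> -1/2 \<le> Re z \<and> Re z \<le> 1/2 \<and> cmod z \<ge> 1}"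

text \<open>Fundamental domain for Gamma^3: F1 \<union> T F1 \<union> T^2 F1 (I, T, T^2 are coset
  representatives of Gamma^3 in PSL2(Z)).\<close>
definition F3 :: "complex set" where
  "F3 = {z. Im z > 0 \<and> -1/2 \<le> Re z \<and> Re z \<le> 5/2 \<and> (\<forall>n::int. cmod (z - of_int n) \<ge> 1)}"

definition real_analytic_UHP :: "(complex \<Rightarrow> complex) \<Rightarrow> bool" where
  "real_analytic_UHP f \<longleftrightarrow> (\<forall>z0\<in>UHP. \<exists>r>0. \<exists>c :: nat \<times> nat \<Rightarrow> complex.
      \<forall>z\<in>ball z0 r. ((\<lambda>(j,k). c (j,k) * of_real ((Re z - Re z0) ^ j * (Im z - Im z0) ^ k))
                       has_sum f z) UNIV)"

definition dxx :: "(complex \<Rightarrow> complex) \<Rightarrow> complex \<Rightarrow> complex" where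
  "dxx f z = vector_derivative (\<lambda>s. vector_derivative (\<lambda>t. f (Complex t (Im z))) (at s)) (at (Re z))"

definition dyy :: "(complex \<Rightarrow> complex) \<Rightarrow> complex \<Rightarrow> complex" where
  "dyy f z = vector_derivative (\<lambda>s. vector_derivative (\<lambda>t. f (Complex (Re z) t)) (at s)) (at (Im z))"

text \<open>Maass cusp forms of spectral parameter R on the group G (a set of matrices in SL2Z)
  with fundamental domain F. Convention: f is extended by 0 outside the upper half-plane.\<close>
definition Maass :: "(int \<times> int \<times> int \<times> int) set \<Rightarrow> complex set \<Rightarrow> real \<Rightarrow> (complex \<Rightarrow> complex) set" where
  "Maass G F R = {f.
     (\<forall>z. z \<notin> UHP \<longrightarrow> f z = 0) \<and>
     real_analytic_UHP f \<and>
     (\<forall>M\<in>G. \<forall>z\<in>UHP. f (mob M z) = f z) \<and>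
     (\<forall>z\<in>UHP. - ((Im z)^2) * (dxx f z + dyy f z) = of_real (1/4 + R^2) * f z) \<and>
     (\<forall>M\<in>SL2Z. \<forall>e>0. \<exists>Y. \<forall>z. Im z > Y \<longrightarrow> cmod (f (mob M z)) < e) \<and>
     set_integrable lborel F (\<lambda>z. (cmod (f z))^2 / (Im z)^2)}"

definition petersson3 :: "(complex \<Rightarrow> complex) \<Rightarrow> (complex \<Rightarrow> complex) \<Rightarrow> complex" where
  "petersson3 f g = (LINT z:F3|lborel. f z * cnj (g z) / of_real ((Im z)^2))"

definition Maass_full :: "real \<Rightarrow> (complex \<Rightarrow> complex) set" where
  "Maass_full R = Maass SL2Z F1 R"

definition Maass_Gamma3 :: "real \<Rightarrow> (complex \<Rightarrow> complex) set" where
  "Maass_Gamma3 R = Maass Gamma3 F3 R"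

definition Maass_new3 :: "real \<Rightarrow> (complex \<Rightarrow> complex) set" where
  "Maass_new3 R = {f \<in> Maass_Gamma3 R. \<forall>g\<in>Maass_full R. petersson3 f g = 0}"

end

theory Submission
  imports Defs
begin

(*
  Let f be a non-zero new form. If f and its translate f(z + 1) are dependent, then
  f(z + 1) = c f(z); since z + 3 is given by an element of Gamma3, c^3 = 1. Moreover c <> 1:
  a 1-periodic Gamma3-invariant form is invariant under all of SL2(Z) (Gamma3 has the coset
  representatives 1, T, T^2), so it lies in the old space, is orthogonal to itself and vanishes.
  The reflected form z |-> f(-conj z) is again a new form, and it satisfies
  g(z + 1) = c^-1 g(z) with c^-1 <> c, so f and g are independent.
  That translations and reflections act on the new space rests on three facts: they normalise
  Gamma3, they commute with the Laplacian, and they map the strip F3 to a strip of width 3, over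
  which 3-periodic functions have the same integral.
*)

section \<open>Moebius transformations and horizontal isometries\<close>

lemma mob_eq: "mob (a,b,c,d) z = (of_int a * z + of_int b) / (of_int c * z + of_int d)"
  by (simp add: mob_def)

lemma SL2Z_iff: "(a,b,c,d) \<in> SL2Z \<longleftrightarrow> a*d - b*c = 1"
  by (simp add: SL2Z_def)

lemma Gamma3_iff: "(a,b,c,d) \<in> Gamma3 \<longleftrightarrow> a*d - b*c = 1 \<and> (a*b + c*d) mod 3 = 0"
  by (simp add: Gamma3_def)

lemma UHP_iff: "z \<in> UHP \<longleftrightarrow> Im z > 0"
  by (simp add: UHP_def)

lemma mob_denom_nonzero:
  assumes "a*d - b*c = (1::int)" "Im z > 0"
  shows "of_int c * z + of_int d \<noteq> (0::complex)"
proof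
  assume h: "of_int c * z + of_int d = 0"
  then have "Im (of_int c * z + of_int d) = 0" by simp
  then have "c = 0" using assms(2) by simp
  with h assms(1) show False by simp
qed

lemma Im_mob:
  assumes "a*d - b*c = (1::int)" "Im z > 0"
  shows "Im (mob (a,b,c,d) z) = Im z / (cmod (of_int c * z + of_int d))^2"
proof -
  have "Im (of_int a * z + of_int b) * Re (of_int c * z + of_int d)
          - Re (of_int a * z + of_int b) * Im (of_int c * z + of_int d)
        = (real_of_int (a*d - b*c)) * Im z"
    by (simp add: algebra_simps)
  then show ?thesis using assms(1) by (simp add: mob_eq Im_divide')
qed

lemma mob_in_UHP:
  assumes "M \<in> SL2Z" "z \<in> UHP"
  shows "mob M z \<in> UHP"
proof -
  obtain a b c d where M: "M = (a,b,c,d)" and det: "a*d - b*c = 1"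
    using assms(1) by (cases M) (auto simp: SL2Z_def)
  have "Im z > 0" using assms(2) by (simp add: UHP_iff)
  with mob_denom_nonzero[OF det] Im_mob[OF det] show ?thesis
    by (simp add: M UHP_iff)
qed

(* For e = 1 resp. e = -1, hmove e k is z |-> z + k resp. z |-> k - cnj z, and hconj e k M is
   the matrix of the conjugate map hmove e k o mob M o (hmove e k)^-1. *)
definition hmove :: "int \<Rightarrow> int \<Rightarrow> complex \<Rightarrow> complex" where
  "hmove e k z = Complex (of_int e * Re z + of_int k) (Im z)"

definition hconj :: "int \<Rightarrow> int \<Rightarrow> int \<times> int \<times> int \<times> int \<Rightarrow> int \<times> int \<times> int \<times> int" where
  "hconj e k M = (case M of (a,b,c,d) \<Rightarrow>
     (a + e*k*c, e*b + k*d - k*a - e*k*k*c, e*c, d - e*k*c))"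

lemma Re_hmove [simp]: "Re (hmove e k z) = of_int e * Re z + of_int k"
  by (simp add: hmove_def)

lemma Im_hmove [simp]: "Im (hmove e k z) = Im z"
  by (simp add: hmove_def)

lemma hmove_in_UHP_iff [simp]: "hmove e k z \<in> UHP \<longleftrightarrow> z \<in> UHP"
  by (simp add: UHP_iff)

lemma hmove_shift: "hmove e k z = hmove e 0 z + of_int k"
  by (simp add: hmove_def complex_eq_iff)

lemma hmove_plus: "hmove 1 k z = z + of_int k"
  by (simp add: hmove_def complex_eq_iff)

lemma hmove_reflect: "hmove (-1) k z = of_int k - cnj z"
  by (simp add: hmove_def complex_eq_iff)

lemma abs_eq_1_cases: "\<bar>e\<bar> = (1::int) \<Longrightarrow> e = 1 \<or> e = -1"
  by linarith

lemma hmove_hmove_inverse: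
  assumes "\<bar>e\<bar> = 1" shows "hmove e k (hmove e (- (e * k)) z) = z"
  using abs_eq_1_cases[OF assms] by (auto simp: hmove_def complex_eq_iff)

lemma hmove_inverse_hmove:
  assumes "\<bar>e\<bar> = 1" shows "hmove e (- (e * k)) (hmove e k z) = z"
  using abs_eq_1_cases[OF assms] by (auto simp: hmove_def complex_eq_iff)

lemma dist_hmove:
  assumes "\<bar>e\<bar> = 1" shows "dist (hmove e k z) (hmove e k w) = dist z w"
proof -
  have "(real_of_int e * Re z - real_of_int e * Re w)^2 = (Re z - Re w)^2"
    using abs_eq_1_cases[OF assms] by (auto simp: power2_eq_square algebra_simps)
  then show ?thesis by (simp add: hmove_def dist_norm cmod_def)
qed

lemma hconj_SL2Z:
  assumes "\<bar>e\<bar> = 1" "M \<in> SL2Z"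
  shows "hconj e k M \<in> SL2Z"
proof -
  have "e * e = 1" using abs_eq_1_cases[OF assms(1)] by auto
  moreover obtain a b c d where "M = (a,b,c,d)" "a*d - b*c = 1"
    using assms(2) by (cases M) (auto simp: SL2Z_def)
  ultimately show ?thesis
    by (simp add: hconj_def SL2Z_def algebra_simps)
qed

lemma hmove_mob:
  assumes "\<bar>e\<bar> = 1" "M \<in> SL2Z" "Im z > 0"
  shows "hmove e k (mob M z) = mob (hconj e k M) (hmove e k z)"
proof -
  obtain a b c d where M: "M = (a,b,c,d)" and det: "a*d - b*c = 1"
    using assms(2) by (cases M) (auto simp: SL2Z_def)
  have nz: "of_int c * z + of_int d \<noteq> 0" using mob_denom_nonzero[OF det assms(3)] .
  then have nz': "of_int c * cnj z + of_int d \<noteq> 0"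
    by (metis complex_cnj_cnj complex_cnj_add complex_cnj_mult complex_cnj_of_int complex_cnj_zero)
  consider "e = 1" | "e = -1" using abs_eq_1_cases[OF assms(1)] by blast
  then show ?thesis
  proof cases
    case 1
    have hM: "hconj e k M = (a + k*c, b + k*d - k*a - k*k*c, c, d - k*c)"
      by (simp add: 1 M hconj_def)
    have den: "of_int c * (z + of_int k) + of_int (d - k*c) = of_int c * z + (of_int d :: complex)"
      by (simp add: algebra_simps)
    have num: "of_int (a + k*c) * (z + of_int k) + of_int (b + k*d - k*a - k*k*c)
        = (of_int a * z + of_int b) + of_int k * (of_int c * z + (of_int d :: complex))"
      by (simp add: algebra_simps)
    have "mob (hconj e k M) (hmove e k z)
        = ((of_int a * z + of_int b) + of_int k * (of_int c * z + of_int d)) / (of_int c * z + of_int d)"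
      unfolding hM hmove_plus[of k z, folded 1] mob_eq num den ..
    also have "\<dots> = mob M z + of_int k"
      using nz by (simp add: M mob_eq add_divide_distrib)
    finally show ?thesis by (simp add: 1 hmove_plus)
  next
    case 2
    have hM: "hconj e k M = (a - k*c, k*k*c + k*d - k*a - b, - c, d + k*c)"
      by (simp add: 2 M hconj_def)
    have den: "of_int (- c) * (of_int k - cnj z) + of_int (d + k*c) = of_int c * cnj z + (of_int d :: complex)"
      by (simp add: algebra_simps)
    have num: "of_int (a - k*c) * (of_int k - cnj z) + of_int (k*k*c + k*d - k*a - b)
        = of_int k * (of_int c * cnj z + of_int d) - (of_int a * cnj z + (of_int b :: complex))"
      by (simp add: algebra_simps)
    have "mob (hconj e k M) (hmove e k z)
        = (of_int k * (of_int c * cnj z + of_int d) - (of_int a * cnj z + of_int b)) / (of_int c * cnj z + of_int d)"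
      unfolding hM hmove_reflect[of k z, folded 2] mob_eq num den ..
    also have "\<dots> = of_int k - cnj (mob M z)"
      using nz' by (simp add: M mob_eq diff_divide_distrib)
    finally show ?thesis by (simp add: 2 hmove_reflect)
  qed
qed

section \<open>The subgroup Gamma3\<close>

lemma Gamma3_subset_SL2Z: "Gamma3 \<subseteq> SL2Z"
  by (auto simp: Gamma3_def SL2Z_def)

lemma mod3_cases: "(x::int) mod 3 \<in> {0,1,2}"
  by auto

(* Both statements below depend only on the entries modulo 3 and reduce to a finite check. *)
lemma hconj_Gamma3:
  assumes e: "\<bar>e\<bar> = 1" and M: "M \<in> Gamma3"
  shows "hconj e k M \<in> Gamma3"
proof -
  obtain a b c d where Md: "M = (a,b,c,d)" and det: "a*d - b*c = 1" and m: "(a*b + c*d) mod 3 = 0"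
    using M by (cases M) (auto simp: Gamma3_def)
  have tab: "\<forall>e\<in>{1,-1::int}. \<forall>k\<in>{0,1,2::int}. \<forall>a\<in>{0,1,2::int}. \<forall>b\<in>{0,1,2::int}.
      \<forall>c\<in>{0,1,2::int}. \<forall>d\<in>{0,1,2::int}.
      (a*d - b*c) mod 3 = 1 \<longrightarrow> (a*b + c*d) mod 3 = 0 \<longrightarrow>
      ((a + e*k*c) * (e*b + k*d - k*a - e*k*k*c) + (e*c) * (d - e*k*c)) mod 3 = 0"
    by simp
  have "(a*d - b*c) mod 3 = ((a mod 3)*(d mod 3) - (b mod 3)*(c mod 3)) mod 3"
    by (intro mod_mult_cong mod_diff_cong; simp)
  then have det3: "((a mod 3)*(d mod 3) - (b mod 3)*(c mod 3)) mod 3 = 1"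
    using det by simp
  have "(a*b + c*d) mod 3 = ((a mod 3)*(b mod 3) + (c mod 3)*(d mod 3)) mod 3"
    by (intro mod_add_cong mod_mult_cong; simp)
  then have m3: "((a mod 3)*(b mod 3) + (c mod 3)*(d mod 3)) mod 3 = 0"
    using m by simp
  have "e \<in> {1,-1}" using abs_eq_1_cases[OF e] by blast
  have "((a + e*k*c) * (e*b + k*d - k*a - e*k*k*c) + (e*c) * (d - e*k*c)) mod 3
      = (((a mod 3) + e*(k mod 3)*(c mod 3)) * (e*(b mod 3) + (k mod 3)*(d mod 3) - (k mod 3)*(a mod 3)
          - e*(k mod 3)*(k mod 3)*(c mod 3)) + (e*(c mod 3)) * ((d mod 3) - e*(k mod 3)*(c mod 3))) mod 3"
    by (intro mod_add_cong mod_mult_cong mod_diff_cong; simp)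
  also have "\<dots> = 0"
    by (rule tab[rule_format, OF \<open>e \<in> {1,-1}\<close> mod3_cases mod3_cases mod3_cases mod3_cases mod3_cases det3 m3])
  finally have "((a + e*k*c) * (e*b + k*d - k*a - e*k*k*c) + (e*c) * (d - e*k*c)) mod 3 = 0" .
  moreover have hM: "hconj e k M = (a + e*k*c, e*b + k*d - k*a - e*k*k*c, e*c, d - e*k*c)"
    by (simp add: Md hconj_def)
  moreover have "hconj e k M \<in> SL2Z"
    using hconj_SL2Z[OF e] M Gamma3_subset_SL2Z by blast
  ultimately show ?thesis unfolding hM SL2Z_iff Gamma3_iff by blast
qed

lemma SL2Z_eq_Gamma3_cosets:
  assumes "a*d - b*c = (1::int)"
  obtains k :: int where "k \<in> {0,1,2}" "(a, b - k*a, c, d - k*c) \<in> Gamma3"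
proof -
  have tab: "\<forall>a\<in>{0,1,2::int}. \<forall>b\<in>{0,1,2::int}. \<forall>c\<in>{0,1,2::int}. \<forall>d\<in>{0,1,2::int}.
      (a*d - b*c) mod 3 = 1 \<longrightarrow> (\<exists>k\<in>{0,1,2::int}. (a*(b - k*a) + c*(d - k*c)) mod 3 = 0)"
    by simp
  have "(a*d - b*c) mod 3 = ((a mod 3)*(d mod 3) - (b mod 3)*(c mod 3)) mod 3"
    by (intro mod_mult_cong mod_diff_cong; simp)
  then have det3: "((a mod 3)*(d mod 3) - (b mod 3)*(c mod 3)) mod 3 = 1"
    using assms by simp
  from tab[rule_format, OF mod3_cases mod3_cases mod3_cases mod3_cases det3]
  obtain k where k: "k \<in> {0,1,2}"
    and k0: "((a mod 3)*((b mod 3) - k*(a mod 3)) + (c mod 3)*((d mod 3) - k*(c mod 3))) mod 3 = 0"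
    by (rule bexE)
  have "(a*(b - k*a) + c*(d - k*c)) mod 3
      = ((a mod 3)*((b mod 3) - k*(a mod 3)) + (c mod 3)*((d mod 3) - k*(c mod 3))) mod 3"
    by (intro mod_add_cong mod_mult_cong mod_diff_cong; simp)
  then have "(a*(b - k*a) + c*(d - k*c)) mod 3 = 0"
    using k0 by (rule trans)
  moreover have "a*(d - k*c) - (b - k*a)*c = 1" using assms by (simp add: algebra_simps)
  ultimately show ?thesis using that k by (simp add: Gamma3_iff)
qed

lemma periodic_of_int:
  fixes f :: "complex \<Rightarrow> 'a"
  assumes "\<forall>z. f (z + 1) = f z"
  shows "f (z + of_int k) = f z"
proof (induction k rule: int_induct[where k = 0])
  case (step1 i)
  then show ?case using assms by (metis add.assoc of_int_add of_int_1)
next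
  case (step2 i)
  then show ?case using assms by (metis diff_add_cancel of_int_diff of_int_1 add.assoc)
qed simp

lemma Gamma3_periodic_imp_SL2Z_invariant:
  assumes G: "\<forall>M\<in>Gamma3. \<forall>z\<in>UHP. f (mob M z) = f z" and T: "\<forall>z. f (z + 1) = f z"
  shows "\<forall>M\<in>SL2Z. \<forall>z\<in>UHP. f (mob M z) = f z"
proof (intro ballI)
  fix M z assume M: "M \<in> SL2Z" and z: "z \<in> UHP"
  obtain a b c d where Md: "M = (a,b,c,d)" and det: "a*d - b*c = 1"
    using M by (cases M) (auto simp: SL2Z_def)
  obtain k where N: "(a, b - k*a, c, d - k*c) \<in> Gamma3"
    using SL2Z_eq_Gamma3_cosets[OF det] by blast
  have "mob M z = mob (a, b - k*a, c, d - k*c) (z + of_int k)"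
    by (simp add: Md mob_eq algebra_simps)
  also have "f \<dots> = f (z + of_int k)" using G N z by (simp add: UHP_iff)
  also have "\<dots> = f z" using periodic_of_int[OF T] .
  finally show "f (mob M z) = f z" .
qed

section \<open>Horizontal isometries and the Laplacian\<close>

lemma has_vector_derivative_compose_affine:
  fixes \<phi> :: "real \<Rightarrow> 'a::real_normed_vector"
  assumes "(\<phi> has_vector_derivative D) (at (m * s + a))"
  shows "((\<lambda>t. \<phi> (m * t + a)) has_vector_derivative (m *\<^sub>R D)) (at s)"
proof -
  have "((\<lambda>t. m * t + a) has_vector_derivative m) (at s)"
    unfolding has_real_derivative_iff_has_vector_derivative[symmetric]
    by (auto intro!: derivative_eq_intros)
  from vector_diff_chain_at[OF this, of \<phi> D] assms show ?thesis
    by (simp add: o_def)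
qed

(* The factor e on the left makes both sides describe the same derivatives, so the identity for
   vector_derivative below also holds where phi is not differentiable (both sides are then the
   same SOME term). *)
lemma has_vector_derivative_reflect_iff:
  fixes \<phi> :: "real \<Rightarrow> 'a::real_normed_vector"
  assumes "e * e = 1"
  shows "((\<lambda>t. e *\<^sub>R \<phi> (e * t + a)) has_vector_derivative D) (at s)
     \<longleftrightarrow> (\<phi> has_vector_derivative D) (at (e * s + a))"
proof
  have e: "e *\<^sub>R e *\<^sub>R x = x" for x :: 'a using assms by (simp add: scaleR_scaleR)
  define \<psi> where "\<psi> t = e *\<^sub>R \<phi> (e * t + a)" for t
  assume "(\<psi> has_vector_derivative D) (at s)"
  moreover have "e * (e * s + a) + - e * a = s"
    using assms by (simp add: algebra_simps flip: mult.assoc)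
  ultimately have "(\<psi> has_vector_derivative D) (at (e * (e * s + a) + - e * a))"
    by simp
  from bounded_linear.has_vector_derivative[OF bounded_linear_scaleR_right[of e] has_vector_derivative_compose_affine[OF this]]
  have "((\<lambda>t. e *\<^sub>R \<psi> (e * t + - e * a)) has_vector_derivative D) (at (e * s + a))"
    using e by simp
  moreover have "(\<lambda>t. e *\<^sub>R \<psi> (e * t + - e * a)) = \<phi>"
    using assms e by (simp add: \<psi>_def algebra_simps)
  ultimately show "(\<phi> has_vector_derivative D) (at (e * s + a))" by simp
next
  assume "(\<phi> has_vector_derivative D) (at (e * s + a))"
  from bounded_linear.has_vector_derivative[OF bounded_linear_scaleR_right[of e] has_vector_derivative_compose_affine[OF this]]
  show "((\<lambda>t. e *\<^sub>R \<phi> (e * t + a)) has_vector_derivative D) (at s)"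
    using assms by (simp add: scaleR_scaleR)
qed

lemma vector_derivative_reflect:
  fixes \<phi> :: "real \<Rightarrow> 'a::real_normed_vector"
  assumes "e * e = 1"
  shows "vector_derivative (\<lambda>t. e *\<^sub>R \<phi> (e * t + a)) (at s) = vector_derivative \<phi> (at (e * s + a))"
  unfolding vector_derivative_def has_vector_derivative_reflect_iff[OF assms] ..

lemma real_analytic_UHP_horizontal_differentiable:
  assumes f: "real_analytic_UHP f" and y: "y > 0"
  shows "(\<lambda>t. f (Complex t y)) differentiable (at s)"
proof -
  obtain r c where r: "r > 0" and hs: "\<And>z. z \<in> ball (Complex s y) r \<Longrightarrow>
      ((\<lambda>(j,k). c (j,k) * of_real ((Re z - s) ^ j * (Im z - y) ^ k)) has_sum f z) UNIV"
    using f y unfolding real_analytic_UHP_def UHP_def by fastforce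
  define a where "a j = c (j,0)" for j
  have row: "((\<lambda>j. a j * of_real (t - s) ^ j) has_sum f (Complex t y)) UNIV" if "\<bar>t - s\<bar> < r" for t
  proof -
    have "Complex t y \<in> ball (Complex s y) r"
      using that by (simp add: dist_complex_def cmod_def)
    from hs[OF this]
    have "((\<lambda>(j,k). c (j,k) * of_real ((t - s) ^ j * 0 ^ k)) has_sum f (Complex t y)) (range (\<lambda>j. (j, 0)))"
      by (rule has_sum_cong_neutral[THEN iffD1, rotated -1]) (auto simp: zero_power)
    then show ?thesis
      by (subst (asm) has_sum_reindex) (auto simp: inj_on_def a_def o_def)
  qed
  define G where "G w = (\<Sum>j. a j * w ^ j)" for w :: complex
  have f_eq_G: "f (Complex t y) = G (of_real (t - s))" if "\<bar>t - s\<bar> < r" for t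
    using has_sum_imp_sums[OF row[OF that]] by (simp add: G_def sums_iff)
  have "summable (\<lambda>n. a n * (complex_of_real (r/2)) ^ n)"
    using has_sum_imp_sums[OF row[of "s + r/2"]] r by (simp add: sums_iff)
  then have "DERIV G 0 :> (\<Sum>n. diffs a n * 0 ^ n)"
    unfolding G_def by (rule termdiffs_strong) (use r in simp)
  then have "((\<lambda>t. G (of_real t)) has_vector_derivative (\<Sum>n. diffs a n * 0 ^ n)) (at (1 * s + - s))"
    using has_vector_derivative_real_field[of G _ 0] by simp
  from has_vector_derivative_compose_affine[OF this]
  have "((\<lambda>t. G (of_real (t - s))) has_vector_derivative (\<Sum>n. diffs a n * 0 ^ n)) (at s)"
    by simp
  then have "((\<lambda>t. f (Complex t y)) has_vector_derivative (\<Sum>n. diffs a n * 0 ^ n)) (at s)"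
    by (rule has_vector_derivative_transform_within_open[of _ _ _ "ball s r"])
       (use r f_eq_G in \<open>auto simp: dist_real_def\<close>)
  then show ?thesis
    using differentiableI_vector by blast
qed

lemma dyy_hmove: "dyy (f \<circ> hmove e k) z = dyy f (hmove e k z)"
proof -
  have "(\<lambda>t. (f \<circ> hmove e k) (Complex (Re z) t)) = (\<lambda>t. f (Complex (Re (hmove e k z)) t))"
    by (simp add: hmove_def)
  then show ?thesis unfolding dyy_def by simp
qed

lemma dxx_hmove:
  assumes e: "\<bar>e\<bar> = 1" and f: "real_analytic_UHP f" and z: "Im z > 0"
  shows "dxx (f \<circ> hmove e k) z = dxx f (hmove e k z)"
proof -
  have ee: "real_of_int e * real_of_int e = 1"
    using abs_eq_1_cases[OF e] by auto
  define \<phi> where "\<phi> t = f (Complex t (Im z))" for t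
  define u where "u s = vector_derivative \<phi> (at s)" for s
  have slice: "(\<lambda>t. (f \<circ> hmove e k) (Complex t (Im z))) = (\<lambda>t. \<phi> (of_int e * t + of_int k))"
    by (simp add: hmove_def \<phi>_def)
  have inner: "vector_derivative (\<lambda>t. \<phi> (of_int e * t + of_int k)) (at s)
      = of_int e *\<^sub>R u (of_int e * s + of_int k)" for s
  proof -
    have "(\<phi> has_vector_derivative u (of_int e * s + of_int k)) (at (of_int e * s + of_int k))"
      unfolding u_def \<phi>_def
      using real_analytic_UHP_horizontal_differentiable[OF f z] vector_derivative_works by blast
    from has_vector_derivative_compose_affine[OF this] show ?thesis
      by (rule vector_derivative_at)
  qed
  have "dxx (f \<circ> hmove e k) z
      = vector_derivative (\<lambda>s. of_int e *\<^sub>R u (of_int e * s + of_int k)) (at (Re z))"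
    unfolding dxx_def slice inner ..
  also have "\<dots> = vector_derivative u (at (of_int e * Re z + of_int k))"
    by (rule vector_derivative_reflect[OF ee])
  also have "\<dots> = dxx f (hmove e k z)"
    by (simp add: dxx_def u_def[abs_def] \<phi>_def[abs_def] hmove_def)
  finally show ?thesis .
qed

lemma real_analytic_UHP_hmove:
  assumes e: "\<bar>e\<bar> = 1" and f: "real_analytic_UHP f"
  shows "real_analytic_UHP (f \<circ> hmove e k)"
  unfolding real_analytic_UHP_def
proof
  fix z0 assume "z0 \<in> UHP"
  then have "hmove e k z0 \<in> UHP" by simp
  then obtain r c where r: "r > 0" and hs: "\<And>z. z \<in> ball (hmove e k z0) r \<Longrightarrow>
      ((\<lambda>(j,l). c (j,l) * of_real ((Re z - Re (hmove e k z0)) ^ j * (Im z - Im (hmove e k z0)) ^ l))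
        has_sum f z) UNIV"
    using f unfolding real_analytic_UHP_def by blast
  define c' where "c' = (\<lambda>(j,l). of_int (e ^ j) * c (j,l))"
  have series_eq: "(\<lambda>(j,l). c' (j,l) * of_real ((Re z - Re z0) ^ j * (Im z - Im z0) ^ l))
      = (\<lambda>(j,l). c (j,l) * of_real ((Re (hmove e k z) - Re (hmove e k z0)) ^ j
                                    * (Im (hmove e k z) - Im (hmove e k z0)) ^ l))" for z
  proof -
    have "Re (hmove e k z) - Re (hmove e k z0) = of_int e * (Re z - Re z0)"
      by (simp add: hmove_def algebra_simps)
    then show ?thesis
      by (auto simp: c'_def power_mult_distrib)
  qed
  show "\<exists>r>0. \<exists>c :: nat \<times> nat \<Rightarrow> complex. \<forall>z\<in>ball z0 r.
      ((\<lambda>(j,l). c (j,l) * of_real ((Re z - Re z0) ^ j * (Im z - Im z0) ^ l)) has_sum (f \<circ> hmove e k) z) UNIV"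
  proof (intro exI[of _ r] conjI exI[of _ c'] ballI)
    fix z assume "z \<in> ball z0 r"
    then have "hmove e k z \<in> ball (hmove e k z0) r"
      by (simp add: dist_hmove[OF e])
    from hs[OF this] show "((\<lambda>(j,l). c' (j,l) * of_real ((Re z - Re z0) ^ j * (Im z - Im z0) ^ l))
        has_sum (f \<circ> hmove e k) z) UNIV"
      unfolding series_eq by simp
  qed (fact r)
qed

section \<open>Integrals over vertical strips\<close>

lemma hmove_continuous: "continuous_on UNIV (hmove e k)"
  unfolding hmove_def by (intro continuous_intros)

lemma hmove_measurable [measurable]: "hmove e k \<in> borel_measurable borel"
  by (rule borel_measurable_continuous_onI[OF hmove_continuous])

lemma lborel_distr_hmove:
  assumes "\<bar>e\<bar> = 1"
  shows "distr lborel borel (hmove e k) = lborel"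
proof -
  define s :: "complex \<Rightarrow> real" where "s j = (if j = 1 then of_int e else 1)" for j
  have "lborel = density (distr lborel borel (\<lambda>x. of_int k + (\<Sum>j\<in>Basis. (s j * (x \<bullet> j)) *\<^sub>R j)))
      (\<lambda>_. (\<Prod>j\<in>Basis. \<bar>s j\<bar>))"
    by (rule lborel_affine_euclidean) (use assms in \<open>auto simp: s_def\<close>)
  moreover have "(\<lambda>x::complex. of_int k + (\<Sum>j\<in>Basis. (s j * (x \<bullet> j)) *\<^sub>R j)) = hmove e k"
    by (auto simp: Basis_complex_def s_def hmove_def complex_eq_iff)
  moreover have "(\<Prod>j\<in>(Basis::complex set). \<bar>s j\<bar>) = 1"
    using assms by (auto simp: Basis_complex_def s_def)
  ultimately show ?thesis by (simp add: density_1)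
qed

lemma integral_hmove:
  fixes \<phi> :: "complex \<Rightarrow> 'b::{banach, second_countable_topology}"
  assumes e: "\<bar>e\<bar> = 1"
  shows "(integrable lborel (\<lambda>z. \<phi> (hmove e k z)) \<longleftrightarrow> integrable lborel \<phi>)
    \<and> integral\<^sup>L lborel (\<lambda>z. \<phi> (hmove e k z)) = integral\<^sup>L lborel \<phi>"
proof (cases "\<phi> \<in> borel_measurable borel")
  case True
  then show ?thesis
    using integrable_distr_eq[of "hmove e k" lborel borel \<phi>] integral_distr[of "hmove e k" lborel borel \<phi>]
    by (simp add: lborel_distr_hmove[OF e])
next
  case False
  have "(\<lambda>z. \<phi> (hmove e k z)) \<notin> borel_measurable borel"
  proof
    assume "(\<lambda>z. \<phi> (hmove e k z)) \<in> borel_measurable borel"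
    then have "(\<lambda>z. \<phi> (hmove e k (hmove e (- (e * k)) z))) \<in> borel_measurable borel"
      by measurable
    with False show False
      by (simp add: hmove_hmove_inverse[OF e])
  qed
  then have "\<not> integrable lborel (\<lambda>z. \<phi> (hmove e k z))" and "\<not> integrable lborel \<phi>"
    using False borel_measurable_integrable by fastforce+
  then show ?thesis
    by (simp add: not_integrable_integral_eq)
qed

lemma set_integral_hmove:
  fixes \<phi> :: "complex \<Rightarrow> 'b::{banach, second_countable_topology}"
  assumes e: "\<bar>e\<bar> = 1" and AB: "\<And>z. z \<in> A \<longleftrightarrow> hmove e k z \<in> B"
  shows "(set_integrable lborel A (\<lambda>z. \<phi> (hmove e k z)) \<longleftrightarrow> set_integrable lborel B \<phi>)
    \<and> (LINT z:A|lborel. \<phi> (hmove e k z)) = (LINT z:B|lborel. \<phi> z)"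
proof -
  have "(\<lambda>z. indicator A z *\<^sub>R \<phi> (hmove e k z)) = (\<lambda>z. indicator B (hmove e k z) *\<^sub>R \<phi> (hmove e k z))"
    by (simp add: indicator_def AB)
  then show ?thesis
    unfolding set_integrable_def set_lebesgue_integral_def
    using integral_hmove[OF e, of "\<lambda>w. indicator B w *\<^sub>R \<phi> w"] by simp
qed

definition strip :: "real \<Rightarrow> real \<Rightarrow> complex set" where
  "strip a b = {z. Im z > 0 \<and> a \<le> Re z \<and> Re z \<le> b \<and> (\<forall>n::int. 1 \<le> cmod (z - of_int n))}"

lemma F3_eq_strip: "F3 = strip (-1/2) (5/2)"
  by (simp add: F3_def strip_def)

lemma strip_sets [measurable]: "strip a b \<in> sets borel"
  unfolding strip_def by measurable

lemma cmod_hmove_diff_of_int: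
  assumes "\<bar>e\<bar> = 1"
  shows "cmod (hmove e k z - of_int n) = cmod (z - of_int (e * (n - k)))"
proof -
  consider "e = 1" | "e = -1" using abs_eq_1_cases[OF assms] by blast
  then show ?thesis
  proof cases
    case 1
    then show ?thesis by (simp add: hmove_plus algebra_simps)
  next
    case 2
    have "hmove e k z - of_int n = - cnj (z - of_int (e * (n - k)))"
      by (simp add: 2 hmove_reflect complex_eq_iff)
    then show ?thesis by (simp only: norm_minus_cancel complex_mod_cnj)
  qed
qed

lemma hmove_far_from_integers_iff:
  assumes e: "\<bar>e\<bar> = 1"
  shows "(\<forall>n::int. 1 \<le> cmod (hmove e k z - of_int n)) \<longleftrightarrow> (\<forall>n::int. 1 \<le> cmod (z - of_int n))"
proof -
  have "e * (e * m + k - k) = m" for m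
    using abs_eq_1_cases[OF e] by auto
  then show ?thesis
    unfolding cmod_hmove_diff_of_int[OF e] by metis
qed

lemma hmove_strip:
  assumes e: "\<bar>e\<bar> = 1"
  obtains b where "\<And>z. z \<in> strip a (a + w) \<longleftrightarrow> hmove e k z \<in> strip b (b + w)"
proof -
  have mem: "hmove e k z \<in> strip b (b + w) \<longleftrightarrow> Im z > 0 \<and> b \<le> of_int e * Re z + of_int k
      \<and> of_int e * Re z + of_int k \<le> b + w \<and> (\<forall>n::int. 1 \<le> cmod (z - of_int n))" for b z
    by (simp add: strip_def hmove_far_from_integers_iff[OF e])
  consider "e = 1" | "e = -1" using abs_eq_1_cases[OF e] by blast
  then show ?thesis
  proof cases
    case 1
    show ?thesis
      by (rule that[of "a + of_int k"]) (simp only: mem, auto simp: strip_def 1)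
  next
    case 2
    show ?thesis
      by (rule that[of "of_int k - a - w"]) (simp only: mem, auto simp: strip_def 2)
  qed
qed

lemma null_sets_vertical_line: "{z::complex. Re z = c} \<in> null_sets lborel"
proof -
  have eq: "{z::complex. Re z = c} = (\<Union>n::nat. cbox (Complex c (- real n)) (Complex c (real n)))"
  proof (intro set_eqI iffI)
    fix z :: complex assume "z \<in> {z. Re z = c}"
    moreover obtain n :: nat where "\<bar>Im z\<bar> \<le> real n" using real_arch_simple by blast
    ultimately have "z \<in> cbox (Complex c (- real n)) (Complex c (real n))"
      by (auto simp: cbox_def Basis_complex_def)
    then show "z \<in> (\<Union>n::nat. cbox (Complex c (- real n)) (Complex c (real n)))" by blast
  qed (auto simp: cbox_def Basis_complex_def)
  have "cbox (Complex c (- real n)) (Complex c (real n)) \<in> null_sets lborel" for n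
    by (auto simp: null_sets_def emeasure_lborel_cbox_eq Basis_complex_def)
  then show ?thesis unfolding eq by (rule null_sets_UN)
qed

lemma set_integral_strip_split:
  fixes \<phi> :: "complex \<Rightarrow> 'b::{banach, second_countable_topology}"
  assumes "a \<le> b" "b \<le> c"
  shows "set_integrable lborel (strip a c) \<phi>
           \<longleftrightarrow> set_integrable lborel (strip a b) \<phi> \<and> set_integrable lborel (strip b c) \<phi>"
    and "set_integrable lborel (strip a c) \<phi> \<Longrightarrow>
           (LINT z:strip a c|lborel. \<phi> z) = (LINT z:strip a b|lborel. \<phi> z) + (LINT z:strip b c|lborel. \<phi> z)"
proof -
  have split: "strip a c = strip a b \<union> strip b c"
    using assms by (auto simp: strip_def)
  have disj: "AE z in lborel. \<not> (z \<in> strip a b \<and> z \<in> strip b c)"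
    using AE_not_in[OF null_sets_vertical_line[of b]] by eventually_elim (auto simp: strip_def)
  show iff: "set_integrable lborel (strip a c) \<phi>
           \<longleftrightarrow> set_integrable lborel (strip a b) \<phi> \<and> set_integrable lborel (strip b c) \<phi>"
  proof
    assume "set_integrable lborel (strip a c) \<phi>"
    then show "set_integrable lborel (strip a b) \<phi> \<and> set_integrable lborel (strip b c) \<phi>"
      using set_integrable_subset split by (metis Un_upper1 Un_upper2 sets_lborel strip_sets)
  next
    assume "set_integrable lborel (strip a b) \<phi> \<and> set_integrable lborel (strip b c) \<phi>"
    then show "set_integrable lborel (strip a c) \<phi>"
      unfolding split by (intro set_integrable_Un) auto
  qed
  show "set_integrable lborel (strip a c) \<phi> \<Longrightarrow>
           (LINT z:strip a c|lborel. \<phi> z) = (LINT z:strip a b|lborel. \<phi> z) + (LINT z:strip b c|lborel. \<phi> z)"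
    using iff unfolding split by (intro set_integral_Un_AE[OF disj]) auto
qed

lemma set_integral_strip_periodic:
  fixes \<phi> :: "complex \<Rightarrow> 'b::{banach, second_countable_topology}" and p :: int and a b :: real
  assumes per: "\<And>z. \<phi> (z + of_int p) = \<phi> z" and p: "p > 0"
  shows "(set_integrable lborel (strip a (a + p)) \<phi> \<longleftrightarrow> set_integrable lborel (strip b (b + p)) \<phi>)
    \<and> (LINT z:strip a (a + p)|lborel. \<phi> z) = (LINT z:strip b (b + p)|lborel. \<phi> z)"
proof -
  \<comment> \<open>V packs integrability and value, so that the equalities can be chained.\<close>
  define V where "V a = (set_integrable lborel (strip a (a + p)) \<phi>, LINT z:strip a (a + p)|lborel. \<phi> z)"
    for a
  have adjacent: "V a = V b" if "a \<le> b" "b \<le> a + p" for a b :: real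
  proof -
    have "z \<in> strip a b \<longleftrightarrow> hmove 1 p z \<in> strip (a + p) (b + p)" for z
      using hmove_far_from_integers_iff[of 1 p z] by (auto simp: strip_def)
    from set_integral_hmove[OF _ this, of \<phi>]
    have shift: "(set_integrable lborel (strip a b) \<phi> \<longleftrightarrow> set_integrable lborel (strip (a + p) (b + p)) \<phi>)
      \<and> (LINT z:strip a b|lborel. \<phi> z) = (LINT z:strip (a + p) (b + p)|lborel. \<phi> z)"
      by (simp add: hmove_plus per)
    have "a \<le> a + p" "b \<le> b + p" using p by simp_all
    with that shift show ?thesis
      unfolding V_def
      using set_integral_strip_split[of a b "a + p" \<phi>] set_integral_strip_split[of b "a + p" "b + p" \<phi>]
      by (auto simp: not_integrable_integral_eq set_integrable_def set_lebesgue_integral_def add.commute)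
  qed
  have "V a = V b" if "a \<le> b" for a b :: real
  proof -
    have "\<forall>a::real. a \<le> b \<longrightarrow> b - a \<le> real n * p \<longrightarrow> V a = V b" for n
    proof (induction n)
      case (Suc n)
      show ?case
      proof (intro allI impI)
        fix a assume "a \<le> b" "b - a \<le> real (Suc n) * p"
        then show "V a = V b"
          using adjacent[of a b] adjacent[of a "a + p"] Suc.IH[rule_format, of "a + p"] p
          by (cases "b \<le> a + p") (auto simp: algebra_simps)
      qed
    qed simp
    moreover obtain n :: nat where "b - a \<le> real n * p"
      using p real_arch_simple[of "(b - a) / p"] by (auto simp: field_simps)
    ultimately show ?thesis using that by blast
  qed
  then have "V a = V b"
    by (metis linear)
  then show ?thesis by (simp add: V_def)
qed

section \<open>Horizontal isometries act on Maass forms\<close>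

lemma Maass_hmove:
  assumes f: "f \<in> Maass G F R" and e: "\<bar>e\<bar> = 1"
    and G: "G \<subseteq> SL2Z" "\<And>M. M \<in> G \<Longrightarrow> hconj e k M \<in> G"
    and int: "set_integrable lborel F (\<lambda>z. (cmod (f (hmove e k z)))^2 / (Im z)^2)"
  shows "f \<circ> hmove e k \<in> Maass G F R"
proof -
  have f': "\<forall>z. z \<notin> UHP \<longrightarrow> f z = 0" "real_analytic_UHP f" "\<forall>M\<in>G. \<forall>z\<in>UHP. f (mob M z) = f z"
    "\<forall>z\<in>UHP. - ((Im z)^2) * (dxx f z + dyy f z) = of_real (1/4 + R^2) * f z"
    "\<forall>M\<in>SL2Z. \<forall>\<epsilon>>0. \<exists>Y. \<forall>z. Im z > Y \<longrightarrow> cmod (f (mob M z)) < \<epsilon>"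
    using f by (simp_all add: Maass_def)
  have inv: "(f \<circ> hmove e k) (mob M z) = (f \<circ> hmove e k) z" if "M \<in> G" "z \<in> UHP" for M z
  proof -
    have "(f \<circ> hmove e k) (mob M z) = f (mob (hconj e k M) (hmove e k z))"
      using hmove_mob[OF e, of M z] that G(1) by (auto simp: UHP_iff)
    also have "\<dots> = f (hmove e k z)"
      using f'(3) G(2)[OF that(1)] that(2) by simp
    finally show ?thesis by simp
  qed
  have eigen: "- ((Im z)^2) * (dxx (f \<circ> hmove e k) z + dyy (f \<circ> hmove e k) z)
      = of_real (1/4 + R^2) * (f \<circ> hmove e k) z" if "z \<in> UHP" for z
  proof -
    have "hmove e k z \<in> UHP" using that by simp
    from f'(4)[rule_format, OF this] have "- ((Im z)^2) * (dxx f (hmove e k z) + dyy f (hmove e k z))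
        = of_real (1/4 + R^2) * f (hmove e k z)" by simp
    then show ?thesis
      using that dxx_hmove[OF e f'(2), of z k] dyy_hmove[of f e k z] by (simp add: UHP_iff)
  qed
  have cusp: "\<exists>Y. \<forall>z. Im z > Y \<longrightarrow> cmod ((f \<circ> hmove e k) (mob M z)) < \<epsilon>"
    if M: "M \<in> SL2Z" and \<epsilon>: "\<epsilon> > 0" for M \<epsilon>
  proof -
    obtain Y where Y: "\<And>z. Im z > Y \<Longrightarrow> cmod (f (mob (hconj e k M) z)) < \<epsilon>"
      using f'(5) hconj_SL2Z[OF e M] \<epsilon> by blast
    have "cmod ((f \<circ> hmove e k) (mob M z)) < \<epsilon>" if "Im z > max Y 0" for z
      using that Y[of "hmove e k z"] hmove_mob[OF e M, of z] by simp
    then show ?thesis by blast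
  qed
  show ?thesis
    unfolding Maass_def mem_Collect_eq
    using f'(1) real_analytic_UHP_hmove[OF e f'(2)] inv eigen cusp int by (auto simp: UHP_iff)
qed

lemma Maass_translate:
  assumes "f \<in> Maass G F R" "(1, n, 0, 1) \<in> G"
  shows "f (z + of_int n) = f z"
proof (cases "z \<in> UHP")
  case True
  then show ?thesis
    using assms by (auto simp: Maass_def mob_eq)
next
  case False
  then show ?thesis
    using assms by (auto simp: Maass_def UHP_iff)
qed

lemma Maass_full_periodic: "g \<in> Maass_full R \<Longrightarrow> g (z + of_int n) = g z"
  by (rule Maass_translate) (auto simp: Maass_full_def SL2Z_def)

lemma Maass_Gamma3_periodic: "f \<in> Maass_Gamma3 R \<Longrightarrow> f (z + 3) = f z"
  using Maass_translate[of f Gamma3 F3 R 3] by (simp add: Maass_Gamma3_def Gamma3_def)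

lemma F1_hmove_iff: "\<bar>e\<bar> = 1 \<Longrightarrow> z \<in> F1 \<longleftrightarrow> hmove e 0 z \<in> F1"
  using abs_eq_1_cases[of e] by (auto simp: F1_def hmove_def cmod_def)

lemma Maass_full_hmove:
  assumes g: "g \<in> Maass_full R" and e: "\<bar>e\<bar> = 1"
  shows "g \<circ> hmove e k \<in> Maass_full R"
proof -
  have shift: "g \<circ> hmove e k = g \<circ> hmove e 0"
    using Maass_full_periodic[OF g] by (simp add: fun_eq_iff hmove_shift[of e k])
  have "set_integrable lborel F1 (\<lambda>z. (cmod (g z))^2 / (Im z)^2)"
    using g by (simp add: Maass_full_def Maass_def)
  then have "set_integrable lborel F1 (\<lambda>z. (cmod (g (hmove e 0 z)))^2 / (Im (hmove e 0 z))^2)"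
    using set_integral_hmove[OF e F1_hmove_iff[OF e], of "\<lambda>w. (cmod (g w))^2 / (Im w)^2"] by blast
  then have "g \<circ> hmove e 0 \<in> Maass_full R"
    using Maass_hmove[of g SL2Z F1 R e 0] g e hconj_SL2Z[OF e] by (simp add: Maass_full_def)
  then show ?thesis by (simp add: shift)
qed

lemma set_integral_F3_hmove:
  fixes \<phi> :: "complex \<Rightarrow> 'b::{banach, second_countable_topology}"
  assumes e: "\<bar>e\<bar> = 1" and per: "\<And>z. \<phi> (z + 3) = \<phi> z"
  shows "(set_integrable lborel F3 (\<lambda>z. \<phi> (hmove e k z)) \<longleftrightarrow> set_integrable lborel F3 \<phi>)
    \<and> (LINT z:F3|lborel. \<phi> (hmove e k z)) = (LINT z:F3|lborel. \<phi> z)"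
proof -
  have F3: "F3 = strip (-1/2) (-1/2 + of_int 3)"
    by (simp add: F3_eq_strip)
  obtain b where "\<And>z. z \<in> F3 \<longleftrightarrow> hmove e k z \<in> strip b (b + of_int 3)"
    using hmove_strip[OF e] unfolding F3 by blast
  from set_integral_hmove[OF e this, of \<phi>]
    set_integral_strip_periodic[of \<phi> 3 b "-1/2"] per
  show ?thesis by (simp add: F3)
qed

lemma Maass_Gamma3_hmove:
  assumes f: "f \<in> Maass_Gamma3 R" and e: "\<bar>e\<bar> = 1"
  shows "f \<circ> hmove e k \<in> Maass_Gamma3 R"
proof -
  have "set_integrable lborel F3 (\<lambda>z. (cmod (f z))^2 / (Im z)^2)"
    using f by (simp add: Maass_Gamma3_def Maass_def)
  then have "set_integrable lborel F3 (\<lambda>z. (cmod (f (hmove e k z)))^2 / (Im (hmove e k z))^2)"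
    using set_integral_F3_hmove[OF e, of "\<lambda>w. (cmod (f w))^2 / (Im w)^2"] Maass_Gamma3_periodic[OF f]
    by simp
  then show ?thesis
    using Maass_hmove[of f Gamma3 F3 R e k] f e hconj_Gamma3[OF e] Gamma3_subset_SL2Z
    by (simp add: Maass_Gamma3_def)
qed

lemma petersson3_hmove:
  assumes e: "\<bar>e\<bar> = 1" and per: "\<And>z. f (z + 3) = f z" "\<And>z. g (z + 3) = g z"
  shows "petersson3 (f \<circ> hmove e k) (g \<circ> hmove e k) = petersson3 f g"
  unfolding petersson3_def
  using set_integral_F3_hmove[OF e, of "\<lambda>w. f w * cnj (g w) / of_real ((Im w)^2)"] per by simp

lemma Maass_new3_hmove:
  assumes f: "f \<in> Maass_new3 R" and e: "\<bar>e\<bar> = 1"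
  shows "f \<circ> hmove e k \<in> Maass_new3 R"
proof -
  have f3: "f \<in> Maass_Gamma3 R" using f by (simp add: Maass_new3_def)
  have "petersson3 (f \<circ> hmove e k) g = 0" if g: "g \<in> Maass_full R" for g
  proof -
    define g' where "g' = g \<circ> hmove e (- (e * k))"
    have g': "g' \<in> Maass_full R" unfolding g'_def by (rule Maass_full_hmove[OF g e])
    have "g = g' \<circ> hmove e k"
      by (simp add: g'_def fun_eq_iff hmove_inverse_hmove[OF e])
    then have "petersson3 (f \<circ> hmove e k) g = petersson3 f g'"
      using petersson3_hmove[OF e] Maass_Gamma3_periodic[OF f3] Maass_full_periodic[OF g', of _ 3]
      by simp
    also have "\<dots> = 0" using f g' by (simp add: Maass_new3_def)
    finally show ?thesis .
  qed
  then show ?thesis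
    using Maass_Gamma3_hmove[OF f3 e] by (simp add: Maass_new3_def)
qed

section \<open>New forms of period 1 vanish\<close>

lemma monomial_le_scaled:
  fixes d \<rho> x y :: real
  assumes "\<bar>x\<bar> \<le> d" "\<bar>y\<bar> \<le> d" "d \<le> \<rho>" "0 < \<rho>" "(j, l) \<noteq> (0, 0)"
  shows "\<bar>x ^ j * y ^ l\<bar> \<le> d / \<rho> * \<rho> ^ (j + l)"
proof -
  have d: "0 \<le> d" using assms(1) by linarith
  obtain m where m: "j + l = Suc m" using assms(5) by (cases "j + l") auto
  have "\<bar>x ^ j * y ^ l\<bar> \<le> d ^ j * d ^ l"
    unfolding abs_mult power_abs using assms d by (intro mult_mono power_mono) auto
  also have "\<dots> = d * d ^ m" by (simp add: m flip: power_add)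
  also have "\<dots> \<le> d * \<rho> ^ m" using assms d by (intro mult_left_mono power_mono) auto
  also have "\<dots> = d / \<rho> * \<rho> ^ (j + l)" using assms(4) by (simp add: m)
  finally show ?thesis .
qed

lemma real_analytic_UHP_local_Lipschitz:
  assumes f: "real_analytic_UHP f" and z0: "z0 \<in> UHP"
  obtains \<rho> B where "\<rho> > 0" "\<And>w. cmod (w - z0) \<le> \<rho> \<Longrightarrow> cmod (f w - f z0) \<le> B * cmod (w - z0)"
proof -
  obtain r c where r: "r > 0" and hs: "\<And>z. z \<in> ball z0 r \<Longrightarrow>
      ((\<lambda>(j,l). c (j,l) * of_real ((Re z - Re z0) ^ j * (Im z - Im z0) ^ l)) has_sum f z) UNIV"
    using f z0 unfolding real_analytic_UHP_def by blast
  \<comment> \<open>The series converges absolutely at z0 + \<rho>(1 + i); each non-constant term at w is at most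
     |w - z0| / \<rho> times the corresponding term there.\<close>
  define \<rho> where "\<rho> = r / 4"
  have \<rho>: "\<rho> > 0" using r by (simp add: \<rho>_def)
  define N where "N = (\<lambda>(j,l). cmod (c (j,l)) * \<rho> ^ (j + l))"
  have "cmod (Complex \<rho> \<rho>) \<le> \<rho> + \<rho>" using cmod_le[of "Complex \<rho> \<rho>"] \<rho> by simp
  then have "z0 + Complex \<rho> \<rho> \<in> ball z0 r" using \<rho> by (simp add: dist_norm \<rho>_def)
  from hs[OF this] have "((\<lambda>(j,l). c (j,l) * of_real (\<rho> ^ j * \<rho> ^ l)) has_sum f (z0 + Complex \<rho> \<rho>)) UNIV"
    by simp
  then have "(\<lambda>x. norm ((\<lambda>(j,l). c (j,l) * of_real (\<rho> ^ j * \<rho> ^ l)) x)) summable_on UNIV"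
    using has_sum_imp_summable summable_on_iff_abs_summable_on_complex by blast
  moreover have "(\<lambda>x. norm ((\<lambda>(j,l). c (j,l) * of_real (\<rho> ^ j * \<rho> ^ l)) x)) = N"
    using \<rho> by (auto simp: N_def norm_mult power_add abs_mult norm_power)
  ultimately have N: "(N has_sum infsum N UNIV) UNIV" by simp
  have bound: "cmod (f w - f z0) \<le> infsum N UNIV / \<rho> * cmod (w - z0)" if w: "cmod (w - z0) \<le> \<rho>" for w
  proof -
    define d where "d = cmod (w - z0)"
    have "w \<in> ball z0 r" using w r by (simp add: dist_norm \<rho>_def norm_minus_commute)
    from has_sum_add[OF hs[OF this] has_sum_uminusI[OF hs[of z0]]]
    have diff: "((\<lambda>(j,l). c (j,l) * of_real ((Re w - Re z0) ^ j * (Im w - Im z0) ^ l - 0 ^ j * 0 ^ l))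
        has_sum (f w - f z0)) UNIV"
      using r by (simp add: case_prod_beta' algebra_simps)
    have "norm ((\<lambda>(j,l). c (j,l) * of_real ((Re w - Re z0) ^ j * (Im w - Im z0) ^ l - 0 ^ j * 0 ^ l)) x)
        \<le> d / \<rho> * N x" for x
    proof (cases "x = (0, 0)")
      case False
      obtain j l where x: "x = (j, l)" by (cases x)
      have "\<bar>(Re w - Re z0) ^ j * (Im w - Im z0) ^ l\<bar> \<le> d / \<rho> * \<rho> ^ (j + l)"
        using False w abs_Re_le_cmod[of "w - z0"] abs_Im_le_cmod[of "w - z0"] \<rho>
        by (intro monomial_le_scaled) (auto simp: d_def x)
      then have "cmod (c (j,l)) * \<bar>(Re w - Re z0) ^ j * (Im w - Im z0) ^ l\<bar>
          \<le> cmod (c (j,l)) * (d / \<rho> * \<rho> ^ (j + l))"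
        by (rule mult_left_mono) simp
      moreover have "(Re w - Re z0) ^ j * (Im w - Im z0) ^ l - 0 ^ j * 0 ^ l
          = (Re w - Re z0) ^ j * (Im w - Im z0) ^ l"
        using False x by auto
      ultimately show ?thesis
        unfolding x prod.case N_def norm_mult norm_of_real by (simp only: mult_ac)
    qed (use \<rho> in \<open>simp add: N_def d_def\<close>)
    then have "cmod (f w - f z0) \<le> d / \<rho> * infsum N UNIV"
      by (intro norm_infsum_le[OF diff has_sum_cmult_right[OF N]]) auto
    then show ?thesis by (simp add: d_def mult.commute)
  qed
  show ?thesis by (rule that[OF \<rho> bound])
qed

lemma real_analytic_UHP_isCont:
  assumes "real_analytic_UHP f" "z0 \<in> UHP"
  shows "isCont f z0"
proof -
  obtain \<rho> B where \<rho>: "\<rho> > 0" and B: "\<And>w. cmod (w - z0) \<le> \<rho> \<Longrightarrow> cmod (f w - f z0) \<le> B * cmod (w - z0)"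
    using real_analytic_UHP_local_Lipschitz[OF assms] by blast
  have "\<forall>\<^sub>F w in at z0. norm (f w - f z0) \<le> B * cmod (w - z0)"
    using \<rho> B by (auto simp: eventually_at dist_norm intro!: exI[of _ \<rho>])
  moreover have "((\<lambda>w. B * cmod (w - z0)) \<longlongrightarrow> 0) (at z0)"
    by (auto intro!: tendsto_eq_intros)
  ultimately have "((\<lambda>w. f w - f z0) \<longlongrightarrow> 0) (at z0)"
    by (rule Lim_null_comparison)
  then show ?thesis
    unfolding isCont_def by (simp add: LIM_zero_iff)
qed

lemma finite_lattice_points_near:
  assumes z: "Im z > 0"
  shows "finite {(p::int, q::int). cmod (of_int p * z + of_int q) \<le> 1}"
proof -
  define K where "K = 1 / Im z + 1 + \<bar>Re z\<bar> / Im z"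
  have bnd: "\<bar>real_of_int p\<bar> \<le> K \<and> \<bar>real_of_int q\<bar> \<le> K" if "cmod (of_int p * z + of_int q) \<le> 1" for p q
  proof -
    have "\<bar>real_of_int p\<bar> * Im z \<le> 1"
      using abs_Im_le_cmod[of "of_int p * z + of_int q"] that z by (simp add: abs_mult)
    then have p: "\<bar>real_of_int p\<bar> \<le> 1 / Im z" using z by (simp add: field_simps)
    have "\<bar>real_of_int p * Re z + real_of_int q\<bar> \<le> 1"
      using abs_Re_le_cmod[of "of_int p * z + of_int q"] that by simp
    moreover have "\<bar>real_of_int q\<bar> \<le> \<bar>real_of_int p * Re z + real_of_int q\<bar> + \<bar>real_of_int p\<bar> * \<bar>Re z\<bar>"
      using abs_triangle_ineq4[of "real_of_int p * Re z + real_of_int q" "real_of_int p * Re z"]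
      by (simp add: abs_mult)
    ultimately have "\<bar>real_of_int q\<bar> \<le> 1 + \<bar>real_of_int p\<bar> * \<bar>Re z\<bar>"
      by linarith
    also have "\<dots> \<le> 1 + 1 / Im z * \<bar>Re z\<bar>"
      using p by (intro add_left_mono mult_right_mono) auto
    finally show ?thesis using p z unfolding K_def by (simp add: field_simps)
  qed
  define N where "N = nat \<lceil>K\<rceil>"
  have KN: "K \<le> real N" unfolding N_def by linarith
  have "{(p, q). cmod (of_int p * z + of_int q) \<le> 1} \<subseteq> {- int N..int N} \<times> {- int N..int N}"
  proof
    fix x assume "x \<in> {(p, q). cmod (of_int p * z + of_int q) \<le> 1}"
    then obtain p q where x: "x = (p, q)" and "cmod (of_int p * z + of_int q) \<le> 1" by auto
    with bnd KN have "\<bar>real_of_int p\<bar> \<le> real N" "\<bar>real_of_int q\<bar> \<le> real N" by fastforce+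
    then show "x \<in> {- int N..int N} \<times> {- int N..int N}" unfolding x by auto
  qed
  then show ?thesis by (rule finite_subset) simp
qed

lemma SL2Z_reduce_to_F1:
  assumes z: "Im z > 0"
  obtains M where "M \<in> SL2Z" "mob M z \<in> F1"
proof -
  \<comment> \<open>Take a primitive bottom row (c, d) minimising |c z + d| and translate into |Re| \<le> 1/2; the
     new top row is primitive too, so minimality gives |M z| \<ge> 1.\<close>
  define h where "h = (\<lambda>(p, q). cmod (of_int p * z + of_int q))"
  define S where "S = {(p, q). (\<exists>u v. u * p + v * q = (1::int)) \<and> h (p, q) \<le> 1}"
  have "finite S"
    by (rule finite_subset[OF _ finite_lattice_points_near[OF z]]) (auto simp: S_def h_def)
  moreover have "(0, 1) \<in> S"
    by (auto simp: S_def h_def intro: exI[of _ 0] exI[of _ 1])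
  ultimately obtain c d where cd: "(c, d) \<in> S" and min: "\<And>x. x \<in> S \<Longrightarrow> h (c, d) \<le> h x"
    using arg_min_if_finite(1)[of S h] arg_min_least[of S _ h] by (metis empty_iff surj_pair)
  obtain u v where uv: "u * c + v * d = 1" using cd by (auto simp: S_def)
  define a b where "a = v" and "b = - u"
  have det: "a * d - b * c = 1" using uv by (simp add: a_def b_def algebra_simps)
  have den: "of_int c * z + of_int d \<noteq> 0" using mob_denom_nonzero[OF det z] .
  define n where "n = round (Re (mob (a, b, c, d) z))"
  define M where "M = (a - n * c, b - n * d, c, d)"
  have M: "M \<in> SL2Z" using det by (simp add: M_def SL2Z_def algebra_simps)
  have Mz: "mob M z = mob (a, b, c, d) z - of_int n"
    using den by (simp add: M_def mob_eq field_simps)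
  have "\<bar>Re (mob M z)\<bar> \<le> 1/2"
    using of_int_round_abs_le[of "Re (mob (a, b, c, d) z)"] by (simp add: Mz n_def abs_minus_commute)
  moreover have "Im (mob M z) > 0"
    using mob_in_UHP[OF M] z by (simp add: UHP_iff)
  moreover have "h (c, d) \<le> h (a - n * c, b - n * d)"
  proof (cases "h (a - n * c, b - n * d) \<le> 1")
    case True
    have "d * (a - n * c) + (- c) * (b - n * d) = 1" using det by (simp add: algebra_simps)
    with True have "(a - n * c, b - n * d) \<in> S" unfolding S_def by blast
    then show ?thesis by (rule min)
  qed (use cd in \<open>auto simp: S_def\<close>)
  then have "cmod (mob M z) \<ge> 1"
    using den by (simp add: h_def M_def mob_eq norm_divide)
  ultimately have "mob M z \<in> F1"
    unfolding F1_def by (auto simp: abs_le_iff)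
  with M show ?thesis by (rule that)
qed

lemma far_from_integers_if_in_F1:
  assumes "\<bar>Re z\<bar> \<le> 1/2" "cmod z \<ge> 1"
  shows "cmod (z - of_int n) \<ge> 1"
proof (cases "n = 0")
  case False
  then have "\<bar>Re z - real_of_int n\<bar> \<ge> 1/2" using assms(1) by linarith
  then have re_n: "(Re z - real_of_int n)^2 \<ge> (1/2)^2"
    by (metis abs_le_square_iff abs_of_nonneg zero_le_divide_iff zero_le_one zero_le_numeral)
  have "(Re z)^2 \<le> (1/2)^2"
    using assms(1) by (metis abs_le_square_iff abs_of_nonneg zero_le_divide_iff zero_le_one zero_le_numeral)
  moreover have "(cmod z)^2 \<ge> 1"
    using assms(2) by (metis one_le_power)
  ultimately have "(Im z)^2 \<ge> 3/4"
    using cmod_power2[of z] by (simp add: power_divide)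
  with re_n have "1^2 \<le> (cmod (z - of_int n))^2"
    by (simp add: cmod_power2 power_divide)
  then show ?thesis by (rule power2_le_imp_le) simp
qed (use assms in simp)

lemma F1_sets [measurable]: "F1 \<in> sets borel"
  unfolding F1_def by measurable

lemma F1_subset_F3: "F1 \<subseteq> F3"
  using far_from_integers_if_in_F1 by (auto simp: F1_def F3_def abs_le_iff)

lemma F1_interior_approach:
  assumes z: "z \<in> F1" and t: "0 < t" "t \<le> 1/2"
  shows "Complex (Re z * (1 - t)) (Im z * (1 + t)) \<in> interior F1"
proof -
  define S where "S = {w. 0 < Im w \<and> -1/2 < Re w \<and> Re w < 1/2 \<and> 1 < cmod w}"
  have "open S"
    unfolding S_def by (intro open_Collect_conj open_Collect_less continuous_intros)
  moreover have "S \<subseteq> F1"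
    by (auto simp: S_def F1_def)
  moreover have "Complex (Re z * (1 - t)) (Im z * (1 + t)) \<in> S"
  proof -
    define x y where "x = Re z" and "y = Im z"
    have y: "y > 0" and x: "\<bar>x\<bar> \<le> 1/2" and norm: "x^2 + y^2 \<ge> 1"
      using z by (auto simp: F1_def x_def y_def cmod_power2[symmetric] intro: one_le_power)
    have "x^2 \<le> (1/2)^2"
      using x abs_le_square_iff[of x "1/2"] by simp
    then have x2: "x^2 \<le> 1/4" by (simp add: power_divide)
    have "\<bar>x * (1 - t)\<bar> = \<bar>x\<bar> * (1 - t)" using t by (simp add: abs_mult)
    also have "\<dots> \<le> 1/2 * (1 - t)" using x t by (intro mult_right_mono) auto
    also have "\<dots> < 1/2" using t by simp
    finally have re: "\<bar>x * (1 - t)\<bar> < 1/2" .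
    have "(cmod (Complex (x * (1 - t)) (y * (1 + t))))^2 = x^2 * (1-t)^2 + y^2 * (1+t)^2"
      by (simp add: cmod_power2 power_mult_distrib)
    also have "\<dots> \<ge> x^2 * (1-t)^2 + (1 - x^2) * (1+t)^2"
      using norm by (intro add_left_mono mult_right_mono) auto
    also have "x^2 * (1-t)^2 + (1 - x^2) * (1+t)^2 = 1 + t * (2 + t - 4 * x^2)"
      by (simp add: power2_eq_square algebra_simps)
    finally have "(cmod (Complex (x * (1 - t)) (y * (1 + t))))^2 \<ge> 1 + t * (2 + t - 4 * x^2)" .
    moreover have "t * (2 + t - 4 * x^2) > 0"
      using t x2 by (intro mult_pos_pos) auto
    ultimately have "(cmod (Complex (x * (1 - t)) (y * (1 + t))))^2 > 1^2"
      by simp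
    then have "cmod (Complex (x * (1 - t)) (y * (1 + t))) > 1"
      by (rule power_less_imp_less_base) simp
    with re y t show ?thesis
      by (auto simp: S_def x_def y_def abs_less_iff)
  qed
  ultimately show ?thesis
    using interior_maximal by blast
qed

lemma F1_tendsto_interior:
  assumes "z \<in> F1"
  shows "((\<lambda>t. Complex (Re z * (1 - t)) (Im z * (1 + t))) \<longlongrightarrow> z) (at_right 0)"
    and "\<forall>\<^sub>F t in at_right 0. Complex (Re z * (1 - t)) (Im z * (1 + t)) \<in> interior F1"
proof -
  have "((\<lambda>t. Complex (Re z * (1 - t)) (Im z * (1 + t))) \<longlongrightarrow> Complex (Re z * (1 - 0)) (Im z * (1 + 0)))
      (at_right 0)"
    by (intro tendsto_intros)
  then show "((\<lambda>t. Complex (Re z * (1 - t)) (Im z * (1 + t))) \<longlongrightarrow> z) (at_right 0)"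
    by simp
  have "\<forall>\<^sub>F t in at_right 0. (0::real) < t \<and> t \<le> 1/2"
    by (auto simp: eventually_at_right_field intro: exI[of _ "1/2"])
  then show "\<forall>\<^sub>F t in at_right 0. Complex (Re z * (1 - t)) (Im z * (1 + t)) \<in> interior F1"
    by eventually_elim (use F1_interior_approach[OF assms] in blast)
qed

lemma zero_on_open_if_AE_zero:
  fixes f :: "'a::euclidean_space \<Rightarrow> 'b::real_normed_vector"
  assumes S: "open S" and cont: "\<And>x. x \<in> S \<Longrightarrow> isCont f x" and AE: "AE x in lborel. x \<in> S \<longrightarrow> f x = 0"
    and x: "x \<in> S"
  shows "f x = 0"
proof (rule ccontr)
  assume "f x \<noteq> 0"
  then have "\<forall>\<^sub>F y in at x. f y \<noteq> 0"
    using cont[OF x] by (simp add: isCont_def tendsto_imp_eventually_ne)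
  then obtain d where d: "d > 0" "\<And>y. y \<noteq> x \<Longrightarrow> dist y x < d \<Longrightarrow> f y \<noteq> 0"
    by (auto simp: eventually_at)
  obtain \<epsilon> where \<epsilon>: "\<epsilon> > 0" "ball x \<epsilon> \<subseteq> S"
    using S x open_contains_ball by blast
  define r where "r = min d \<epsilon>"
  have r: "r > 0" "\<And>y. y \<in> ball x r \<Longrightarrow> y \<noteq> x \<Longrightarrow> f y \<noteq> 0" "ball x r \<subseteq> S"
    using d \<epsilon> by (auto simp: r_def dist_commute)
  from AE obtain N where N: "{y \<in> space lborel. \<not> (y \<in> S \<longrightarrow> f y = 0)} \<subseteq> N" "emeasure lborel N = 0"
      "N \<in> sets lborel"
    by (rule AE_E)
  have "ball x r - {x} \<subseteq> N" using N(1) r by auto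
  then have "emeasure lborel (ball x r - {x}) = 0"
    using N(2,3) emeasure_mono[of "ball x r - {x}" N lborel] by simp
  moreover have "emeasure lborel (ball x r - {x}) = emeasure lborel (ball x r)"
    by (rule emeasure_Diff_null_set) auto
  ultimately have "measure lborel (ball x r) = 0" by (simp add: measure_def)
  with content_ball_pos[OF r(1)] show False by simp
qed

lemma Maass_full_eq_0_if_zero_on_F1:
  assumes g: "g \<in> Maass_full R" and F1: "\<forall>z\<in>F1. g z = 0"
  shows "g = (\<lambda>z. 0)"
proof
  fix z
  show "g z = 0"
  proof (cases "z \<in> UHP")
    case True
    then obtain M where "M \<in> SL2Z" "mob M z \<in> F1"
      using SL2Z_reduce_to_F1 unfolding UHP_iff by metis
    then show ?thesis
      using g F1 True by (auto simp: Maass_full_def Maass_def)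
  next
    case False
    then show ?thesis using g by (simp add: Maass_full_def Maass_def)
  qed
qed

lemma petersson3_self_eq_0_imp_AE_zero:
  assumes f: "f \<in> Maass_Gamma3 R" and ff: "petersson3 f f = 0"
  shows "AE z in lborel. z \<in> F3 \<longrightarrow> f z = 0"
proof -
  define \<psi> where "\<psi> z = indicator F3 z * ((cmod (f z))^2 / (Im z)^2)" for z
  have "integrable lborel \<psi>"
    using f unfolding \<psi>_def[abs_def] by (simp add: Maass_Gamma3_def Maass_def set_integrable_def)
  moreover have "petersson3 f f = complex_of_real (integral\<^sup>L lborel \<psi>)"
  proof -
    have "indicator F3 w *\<^sub>R (f w * cnj (f w) / of_real ((Im w)^2)) = complex_of_real (\<psi> w)" for w
      by (simp add: \<psi>_def complex_norm_square[symmetric] scaleR_conv_of_real)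
    then show ?thesis
      unfolding petersson3_def set_lebesgue_integral_def by simp
  qed
  ultimately have "AE z in lborel. \<psi> z = 0"
    using ff integral_nonneg_eq_0_iff_AE[of lborel \<psi>] by (simp add: \<psi>_def)
  then show ?thesis
    by eventually_elim (auto simp: \<psi>_def F3_def)
qed

lemma Maass_Gamma3_zero_on_F1_if_petersson3_self_eq_0:
  assumes f: "f \<in> Maass_Gamma3 R" and ff: "petersson3 f f = 0"
  shows "\<forall>z\<in>F1. f z = 0"
proof
  have ra: "real_analytic_UHP f" using f by (simp add: Maass_Gamma3_def Maass_def)
  have F1_UHP: "F1 \<subseteq> UHP" by (auto simp: F1_def UHP_iff)
  have interior: "f w = 0" if "w \<in> interior F1" for w
  proof (rule zero_on_open_if_AE_zero[OF open_interior _ _ that])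
    show "isCont f x" if "x \<in> interior F1" for x
      using that interior_subset F1_UHP real_analytic_UHP_isCont[OF ra] by blast
    from petersson3_self_eq_0_imp_AE_zero[OF f ff]
    show "AE x in lborel. x \<in> interior F1 \<longrightarrow> f x = 0"
      by eventually_elim (use interior_subset F1_subset_F3 in blast)
  qed
  fix z assume z: "z \<in> F1"
  have "((\<lambda>t. f (Complex (Re z * (1 - t)) (Im z * (1 + t)))) \<longlongrightarrow> f z) (at_right 0)"
    using z F1_UHP by (intro isCont_tendsto_compose[OF real_analytic_UHP_isCont[OF ra] F1_tendsto_interior(1)]) auto
  moreover have "\<forall>\<^sub>F t in at_right 0. f (Complex (Re z * (1 - t)) (Im z * (1 + t))) = 0"
    using F1_tendsto_interior(2)[OF z] by eventually_elim (rule interior)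
  ultimately have "((\<lambda>t. 0) \<longlongrightarrow> f z) (at_right (0::real))"
    by (rule Lim_transform_eventually)
  then show "f z = 0"
    by (simp add: tendsto_const_iff)
qed

lemma Maass_new3_periodic_eq_0:
  assumes f: "f \<in> Maass_new3 R" and T: "\<forall>z. f (z + 1) = f z"
  shows "f = (\<lambda>z. 0)"
proof -
  have f3: "f \<in> Maass_Gamma3 R" using f by (simp add: Maass_new3_def)
  have c: "\<forall>z. z \<notin> UHP \<longrightarrow> f z = 0" "real_analytic_UHP f" "\<forall>M\<in>Gamma3. \<forall>z\<in>UHP. f (mob M z) = f z"
    "\<forall>z\<in>UHP. - ((Im z)^2) * (dxx f z + dyy f z) = of_real (1/4 + R^2) * f z"
    "\<forall>M\<in>SL2Z. \<forall>\<epsilon>>0. \<exists>Y. \<forall>z. Im z > Y \<longrightarrow> cmod (f (mob M z)) < \<epsilon>"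
    "set_integrable lborel F3 (\<lambda>z. (cmod (f z))^2 / (Im z)^2)"
    using f3 by (simp_all add: Maass_Gamma3_def Maass_def)
  have "set_integrable lborel F1 (\<lambda>z. (cmod (f z))^2 / (Im z)^2)"
    using F1_subset_F3 by (intro set_integrable_subset[OF c(6)]) auto
  moreover have "\<forall>M\<in>SL2Z. \<forall>z\<in>UHP. f (mob M z) = f z"
    using Gamma3_periodic_imp_SL2Z_invariant[OF c(3) T] .
  ultimately have "f \<in> Maass_full R"
    unfolding Maass_full_def Maass_def mem_Collect_eq using c by blast
  moreover from this have "\<forall>z\<in>F1. f z = 0"
    using f f3 by (intro Maass_Gamma3_zero_on_F1_if_petersson3_self_eq_0) (auto simp: Maass_new3_def)
  ultimately show ?thesis
    by (rule Maass_full_eq_0_if_zero_on_F1)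
qed

section \<open>Two independent new forms\<close>

lemma eigenfunctions_distinct_eigenvalues_independent:
  fixes f h :: "'a \<Rightarrow> 'b::field"
  assumes f: "\<forall>z. f (\<sigma> z) = \<alpha> * f z" and h: "\<forall>z. h (\<sigma> z) = \<beta> * h z" and "\<alpha> \<noteq> \<beta>"
    and "f z0 \<noteq> 0" "h z1 \<noteq> 0"
  shows "\<forall>a b. (\<lambda>z. a * f z + b * h z) = (\<lambda>z. 0) \<longrightarrow> a = 0 \<and> b = 0"
proof (intro allI impI)
  fix a b assume "(\<lambda>z. a * f z + b * h z) = (\<lambda>z. 0)"
  then have ab: "a * f z + b * h z = 0" for z by (metis fun_cong)
  have "a * (\<alpha> - \<beta>) * f z = (a * f (\<sigma> z) + b * h (\<sigma> z)) - \<beta> * (a * f z + b * h z)" for z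
    using f h by (simp add: algebra_simps)
  then have "a * (\<alpha> - \<beta>) * f z0 = 0" using ab by simp
  then have "a = 0" using assms by simp
  with ab[of z1] assms show "a = 0 \<and> b = 0" by simp
qed

lemma dependent_on_shift_imp_eigenfunction:
  fixes f :: "'a \<Rightarrow> 'b::field"
  assumes "f z0 \<noteq> 0" "(\<lambda>z. a * f z + b * f (\<sigma> z)) = (\<lambda>z. 0)" "a \<noteq> 0 \<or> b \<noteq> 0"
  shows "\<forall>z. f (\<sigma> z) = (- a / b) * f z"
proof -
  have ab: "a * f z + b * f (\<sigma> z) = 0" for z using assms(2) by (metis fun_cong)
  have "b \<noteq> 0" using ab[of z0] assms(1,3) by auto
  then show ?thesis using ab by (simp add: field_simps add_eq_0_iff)
qed

lemma Maass_new3_shift_eigenvalue: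
  assumes f: "f \<in> Maass_new3 R" and z0: "f z0 \<noteq> 0" and c: "\<forall>z. f (z + 1) = c * f z"
  shows "c ^ 3 = 1" "c \<noteq> 1"
proof -
  have "f (z0 + 3) = f (((z0 + 1) + 1) + 1)" by (simp add: add.assoc)
  also have "\<dots> = c * (c * (c * f z0))" by (simp only: c[rule_format])
  also have "\<dots> = c ^ 3 * f z0" by (simp add: power3_eq_cube)
  finally have "f (z0 + 3) = c ^ 3 * f z0" .
  moreover have "f (z0 + 3) = f z0"
    using f by (intro Maass_Gamma3_periodic[of f R]) (simp add: Maass_new3_def)
  ultimately show "c ^ 3 = 1" using z0 by simp
  show "c \<noteq> 1"
    using Maass_new3_periodic_eq_0[OF f] c z0 by auto
qed

theorem lemma3p1:
  fixes R :: real
  assumes "\<exists>f\<in>Maass_new3 R. f \<noteq> (\<lambda>z. 0)"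
  shows "\<exists>f\<in>Maass_new3 R. \<exists>g\<in>Maass_new3 R.
           \<forall>a b :: complex. (\<lambda>z. a * f z + b * g z) = (\<lambda>z. 0) \<longrightarrow> a = 0 \<and> b = 0"
proof -
  obtain f z0 where f: "f \<in> Maass_new3 R" and z0: "f z0 \<noteq> 0" using assms by fastforce
  have Tf: "f \<circ> hmove 1 1 \<in> Maass_new3 R" by (rule Maass_new3_hmove[OF f]) simp
  show ?thesis
  proof (cases "\<forall>a b :: complex. (\<lambda>z. a * f z + b * (f \<circ> hmove 1 1) z) = (\<lambda>z. 0) \<longrightarrow> a = 0 \<and> b = 0")
    case False
    then obtain a b :: complex where "(\<lambda>z. a * f z + b * f (z + 1)) = (\<lambda>z. 0)" "a \<noteq> 0 \<or> b \<noteq> 0"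
      by (auto simp: hmove_plus)
    from dependent_on_shift_imp_eigenfunction[where \<sigma> = "\<lambda>z. z + 1", OF z0 this]
    obtain c where c: "\<forall>z. f (z + 1) = c * f z" by blast
    note c3 = Maass_new3_shift_eigenvalue[OF f z0 c]
    define g where "g = f \<circ> hmove (-1) 0"
    have g: "g \<in> Maass_new3 R" unfolding g_def by (rule Maass_new3_hmove[OF f]) simp
    have "c \<noteq> 0" using c3 by auto
    have gc: "g z = c * g (z + 1)" for z
    proof -
      have "g z = f ((- cnj z - 1) + 1)" by (simp add: g_def hmove_reflect)
      also have "\<dots> = c * f (- cnj z - 1)" by (simp only: c[rule_format])
      also have "\<dots> = c * g (z + 1)" by (simp add: g_def hmove_reflect)
      finally show ?thesis .
    qed
    have g_shift: "\<forall>z. g (z + 1) = inverse c * g z"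
    proof
      fix z
      have "inverse c * g z = (inverse c * c) * g (z + 1)" by (simp add: gc[of z])
      then show "g (z + 1) = inverse c * g z" using \<open>c \<noteq> 0\<close> by simp
    qed
    have "c \<noteq> inverse c"
    proof
      assume "c = inverse c"
      then have "c * c = 1" using \<open>c \<noteq> 0\<close> by (metis right_inverse)
      then have "c ^ 3 = c" by (simp add: power3_eq_cube)
      with c3 show False by simp
    qed
    moreover have "g (- cnj z0) \<noteq> 0" using z0 by (simp add: g_def hmove_reflect)
    ultimately have "\<forall>a b. (\<lambda>z. a * f z + b * g z) = (\<lambda>z. 0) \<longrightarrow> a = 0 \<and> b = 0"
      by (rule eigenfunctions_distinct_eigenvalues_independent[OF c g_shift _ z0])
    with f g show ?thesis by blast
  qed (use f Tf in blast)
qed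

end
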